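(* Let $1\le p,q<\infty$ and $\theta>0$, and let $g:\mathbb R\to\mathbb R$ be a measurable function with compact support. Then the multiplication operator $M_g f=fg$ is bounded from $l^{q),\theta}(L^p)$ to $l^{q),\theta}(L^p)$ if and only if $g\in L^\infty(\mathbb R)$. Moreover, in that case $\|M_g\|=\|g\|_{L^\infty}$.
   Context: Index set $\mathbb Z$, $I_k=[k,k+1)$. The space $l^{q),\theta}(L^p)$ consists of complex-valued measurable $f$ on $\mathbb R$ with $f\chi_{I_k}\in L^p$ for all $k\in\mathbb Z$ and $$\|f\|_{p,q),\theta}:=\sup_{\varepsilon>0}\Big(\varepsilon^{\theta}\sum_{k\in\mathbb Z}\Big(\int_k^{k+1}|f(x)|^p\,dx\Big)^{\frac{q(1+\varepsilon)}{p}}\Big)^{\frac{1}{q(1+\varepsilon)}}<\infty.$$ $\|M_g\|$ denotes the operator norm on this space. *)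

theory Defs
  imports "HOL-Analysis.Analysis" "HOL-Probability.Essential_Supremum"
begin

text \<open>Real power on extended nonnegative reals (used only with positive exponents).\<close>
definition enn_powr :: "ennreal \<Rightarrow> real \<Rightarrow> ennreal" where
  "enn_powr x a = (if x = \<infinity> then \<infinity> else ennreal (enn2real x powr a))"

definition loc_int :: "real \<Rightarrow> (real \<Rightarrow> complex) \<Rightarrow> int \<Rightarrow> ennreal" where
  "loc_int p f k = (\<integral>\<^sup>+ x \<in> {real_of_int k..<real_of_int k + 1}. ennreal (cmod (f x) powr p) \<partial>lebesgue)"

definition grand_norm :: "real \<Rightarrow> real \<Rightarrow> real \<Rightarrow> (real \<Rightarrow> complex) \<Rightarrow> ennreal" where
  "grand_norm p q \<theta> f =
     (SUP \<epsilon>\<in>{0<..}. enn_powr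
        (ennreal (\<epsilon> powr \<theta>) *
           (\<integral>\<^sup>+ k. enn_powr (loc_int p f k) (q * (1 + \<epsilon>) / p) \<partial>count_space (UNIV :: int set)))
        (1 / (q * (1 + \<epsilon>))))"

definition grand_space :: "real \<Rightarrow> real \<Rightarrow> real \<Rightarrow> (real \<Rightarrow> complex) set" where
  "grand_space p q \<theta> = {f. f \<in> borel_measurable lebesgue \<and> (\<forall>k. loc_int p f k < \<infinity>)
                          \<and> grand_norm p q \<theta> f < \<infinity>}"

definition mult_op :: "(real \<Rightarrow> real) \<Rightarrow> (real \<Rightarrow> complex) \<Rightarrow> (real \<Rightarrow> complex)" where
  "mult_op g f = (\<lambda>x. f x * complex_of_real (g x))"

definition mult_bounded :: "real \<Rightarrow> real \<Rightarrow> real \<Rightarrow> (real \<Rightarrow> real) \<Rightarrow> bool" where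
  "mult_bounded p q \<theta> g \<longleftrightarrow>
     (\<forall>f \<in> grand_space p q \<theta>. mult_op g f \<in> grand_space p q \<theta>) \<and>
     (\<exists>C::real. \<forall>f \<in> grand_space p q \<theta>.
        grand_norm p q \<theta> (mult_op g f) \<le> ennreal C * grand_norm p q \<theta> f)"

definition mult_opnorm :: "real \<Rightarrow> real \<Rightarrow> real \<Rightarrow> (real \<Rightarrow> real) \<Rightarrow> ennreal" where
  "mult_opnorm p q \<theta> g =
     Inf {C::ennreal. \<forall>f \<in> grand_space p q \<theta>.
            grand_norm p q \<theta> (mult_op g f) \<le> C * grand_norm p q \<theta> f}"

definition Linf_norm :: "(real \<Rightarrow> real) \<Rightarrow> ennreal" where
  "Linf_norm g = esssup lebesgue (\<lambda>x. ennreal \<bar>g x\<bar>)"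

end

theory Submission
  imports Defs
begin

text \<open>
  The norm of f depends on f only through the sequence of its local integrals, monotonically, and
  multiplying f by a constant c \<ge> 0 multiplies every local integral by c^p and hence the norm
  by c. So |g| \<le> ||g||_\<infinity> almost everywhere gives ||gf|| \<le> ||g||_\<infinity> ||f||.
  Conversely, for N < ||g||_\<infinity> the set {|g| > N} meets some unit interval I_k in a set E of
  positive measure; its indicator has finite positive norm and ||g 1_E|| \<ge> N ||1_E||, so no
  constant below ||g||_\<infinity> bounds M_g.
\<close>

lemma enn_powr_mono:
  assumes "x \<le> y" "0 \<le> a"
  shows "enn_powr x a \<le> enn_powr y a"
proof (cases "y = \<infinity>")
  case True
  then show ?thesis by (simp add: enn_powr_def)
next
  case False
  with assms(1) have "x \<noteq> \<infinity>" and "enn2real x \<le> enn2real y"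
    by (auto simp: top_unique enn2real_mono less_top)
  with False assms show ?thesis
    by (auto simp: enn_powr_def intro!: ennreal_leI powr_mono2)
qed

lemma enn_powr_ennreal_mult:
  assumes "0 \<le> c" "0 < a"
  shows "enn_powr (ennreal c * x) a = ennreal (c powr a) * enn_powr x a"
proof (cases "x = \<infinity>")
  case True
  with assms show ?thesis
    by (cases "c = 0") (simp_all add: enn_powr_def ennreal_mult_eq_top_iff)
next
  case False
  then have "ennreal c * x \<noteq> \<infinity>" by (simp add: ennreal_mult_eq_top_iff)
  with False assms show ?thesis
    by (simp add: enn_powr_def enn2real_mult powr_mult ennreal_mult)
qed

lemma enn_powr_ennreal: "0 \<le> x \<Longrightarrow> enn_powr (ennreal x) a = ennreal (x powr a)"
  by (simp add: enn_powr_def)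

definition grand_term :: "real \<Rightarrow> real \<Rightarrow> real \<Rightarrow> real \<Rightarrow> (int \<Rightarrow> ennreal) \<Rightarrow> ennreal" where
  "grand_term p q \<theta> \<epsilon> a =
     enn_powr (ennreal (\<epsilon> powr \<theta>) * (\<integral>\<^sup>+ k. enn_powr (a k) (q * (1 + \<epsilon>) / p) \<partial>count_space UNIV))
       (1 / (q * (1 + \<epsilon>)))"

lemma grand_norm_eq_SUP_grand_term:
  "grand_norm p q \<theta> f = (SUP \<epsilon>\<in>{0<..}. grand_term p q \<theta> \<epsilon> (loc_int p f))"
  by (simp add: grand_norm_def grand_term_def)

lemma grand_term_mono:
  assumes "0 < p" "0 < q" "0 < \<epsilon>" and "\<And>k. a k \<le> b k"
  shows "grand_term p q \<theta> \<epsilon> a \<le> grand_term p q \<theta> \<epsilon> b"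
  unfolding grand_term_def using assms
  by (intro enn_powr_mono mult_left_mono nn_integral_mono) simp_all

lemma grand_term_cmult:
  assumes c: "0 \<le> c" and p: "0 < p" and q: "0 < q" and \<epsilon>: "0 < \<epsilon>"
  shows "grand_term p q \<theta> \<epsilon> (\<lambda>k. ennreal (c powr p) * a k) = ennreal c * grand_term p q \<theta> \<epsilon> a"
proof -
  define r where "r = q * (1 + \<epsilon>) / p"
  define s where "s = 1 / (q * (1 + \<epsilon>))"
  have r: "0 < r" and s: "0 < s" using p q \<epsilon> by (simp_all add: r_def s_def)
  have "((c powr p) powr r) powr s = c"
    using c p q \<epsilon> by (simp add: powr_powr r_def s_def)
  moreover have "(\<integral>\<^sup>+ k. enn_powr (ennreal (c powr p) * a k) r \<partial>count_space UNIV)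
      = ennreal ((c powr p) powr r) * (\<integral>\<^sup>+ k. enn_powr (a k) r \<partial>count_space UNIV)"
    using r by (simp add: enn_powr_ennreal_mult nn_integral_cmult)
  ultimately show ?thesis
    using s unfolding grand_term_def r_def[symmetric] s_def[symmetric]
    by (simp add: mult.left_commute enn_powr_ennreal_mult)
qed

lemma grand_term_concentrated:
  assumes m: "0 \<le> m" and p: "0 < p" and q: "0 < q" and \<epsilon>: "0 < \<epsilon>"
  shows "grand_term p q \<theta> \<epsilon> (\<lambda>j. if j = k then ennreal m else 0)
       = ennreal (\<epsilon> powr (\<theta> / (q * (1 + \<epsilon>))) * m powr (1 / p))"
proof -
  define r where "r = q * (1 + \<epsilon>) / p"
  have "(\<integral>\<^sup>+ j. enn_powr (if j = k then ennreal m else 0) r \<partial>count_space UNIV)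
      = (\<integral>\<^sup>+ j. ennreal (m powr r) * indicator {k} j \<partial>count_space UNIV)"
    using m by (intro nn_integral_cong) (simp add: enn_powr_def)
  also have "\<dots> = ennreal (m powr r)"
    by (simp add: nn_integral_cmult_indicator)
  finally have "grand_term p q \<theta> \<epsilon> (\<lambda>j. if j = k then ennreal m else 0)
      = ennreal ((\<epsilon> powr \<theta> * m powr r) powr (1 / (q * (1 + \<epsilon>))))"
    using \<epsilon> unfolding grand_term_def r_def[symmetric] by (simp add: ennreal_mult[symmetric] enn_powr_ennreal)
  also have "(\<epsilon> powr \<theta> * m powr r) powr (1 / (q * (1 + \<epsilon>)))
      = \<epsilon> powr (\<theta> / (q * (1 + \<epsilon>))) * m powr (1 / p)"
    using \<epsilon> m p q by (simp add: powr_mult powr_powr r_def)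
  finally show ?thesis .
qed

lemma loc_int_mono_AE:
  assumes "AE x in lebesgue. cmod (f x) \<le> cmod (h x)" "0 \<le> p"
  shows "loc_int p f k \<le> loc_int p h k"
  unfolding loc_int_def using assms(1)
  by (intro nn_integral_mono_AE) (auto elim!: eventually_mono intro!: mult_right_mono ennreal_leI powr_mono2 assms(2))

lemma loc_int_mult_op_const:
  assumes [measurable]: "f \<in> borel_measurable lebesgue" and "0 \<le> c"
  shows "loc_int p (mult_op (\<lambda>_. c) f) k = ennreal (c powr p) * loc_int p f k"
proof -
  have [measurable]: "{real_of_int k..<real_of_int k + 1} \<in> sets lebesgue" by simp
  have "cmod (mult_op (\<lambda>_. c) f x) powr p = c powr p * cmod (f x) powr p" for x
    using \<open>0 \<le> c\<close> by (simp add: mult_op_def norm_mult powr_mult)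
  then show ?thesis
    unfolding loc_int_def using \<open>0 \<le> c\<close>
    by (simp add: ennreal_mult nn_integral_cmult mult.assoc)
qed

lemma grand_norm_mono:
  assumes "0 < p" "0 < q" and "\<And>k. loc_int p f k \<le> loc_int p h k"
  shows "grand_norm p q \<theta> f \<le> grand_norm p q \<theta> h"
  unfolding grand_norm_eq_SUP_grand_term using assms
  by (intro SUP_mono) (auto intro: grand_term_mono)

lemma grand_norm_mult_op_const:
  assumes "f \<in> borel_measurable lebesgue" "0 \<le> c" "0 < p" "0 < q"
  shows "grand_norm p q \<theta> (mult_op (\<lambda>_. c) f) = ennreal c * grand_norm p q \<theta> f"
  unfolding grand_norm_eq_SUP_grand_term SUP_mult_left_ennreal
proof (intro SUP_cong refl)
  fix \<epsilon> :: real assume "\<epsilon> \<in> {0<..}"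
  moreover have "loc_int p (mult_op (\<lambda>_. c) f) = (\<lambda>k. ennreal (c powr p) * loc_int p f k)"
    using assms by (simp add: loc_int_mult_op_const fun_eq_iff)
  ultimately show "grand_term p q \<theta> \<epsilon> (loc_int p (mult_op (\<lambda>_. c) f))
      = ennreal c * grand_term p q \<theta> \<epsilon> (loc_int p f)"
    using assms by (simp add: grand_term_cmult)
qed

lemma mult_op_bounded_if_AE_bounded:
  assumes f: "f \<in> grand_space p q \<theta>" and [measurable]: "g \<in> borel_measurable lebesgue"
    and M: "0 \<le> M" and bound: "AE x in lebesgue. \<bar>g x\<bar> \<le> M" and p: "0 < p" and q: "0 < q"
  shows "mult_op g f \<in> grand_space p q \<theta>"
    and "grand_norm p q \<theta> (mult_op g f) \<le> ennreal M * grand_norm p q \<theta> f"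
proof -
  have [measurable]: "f \<in> borel_measurable lebesgue" using f by (simp add: grand_space_def)
  have "AE x in lebesgue. cmod (mult_op g f x) \<le> cmod (mult_op (\<lambda>_. M) f x)"
    using bound by (auto simp: mult_op_def norm_mult mult_left_mono elim!: eventually_mono)
  then have loc: "loc_int p (mult_op g f) k \<le> ennreal (M powr p) * loc_int p f k" for k
    using loc_int_mono_AE[of "mult_op g f" "mult_op (\<lambda>_. M) f" p k] p M
    by (simp add: loc_int_mult_op_const)
  show norm: "grand_norm p q \<theta> (mult_op g f) \<le> ennreal M * grand_norm p q \<theta> f"
    using grand_norm_mono[OF p q, of "mult_op g f" "mult_op (\<lambda>_. M) f" \<theta>] loc M p q
    by (simp add: loc_int_mult_op_const grand_norm_mult_op_const)
  have "mult_op g f \<in> borel_measurable lebesgue" unfolding mult_op_def by measurable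
  moreover have "loc_int p (mult_op g f) k < \<infinity>" for k
    using loc[of k] f by (simp add: grand_space_def ennreal_mult_less_top order.strict_trans1)
  moreover have "grand_norm p q \<theta> (mult_op g f) < \<infinity>"
    using norm f by (simp add: grand_space_def ennreal_mult_less_top order.strict_trans1)
  ultimately show "mult_op g f \<in> grand_space p q \<theta>" by (simp add: grand_space_def)
qed

lemma mult_op_bounded_by_Linf_norm:
  assumes fin: "Linf_norm g < \<infinity>" and f: "f \<in> grand_space p q \<theta>"
    and g: "g \<in> borel_measurable lebesgue" and p: "0 < p" and q: "0 < q"
  shows "mult_op g f \<in> grand_space p q \<theta>"
    and "grand_norm p q \<theta> (mult_op g f) \<le> Linf_norm g * grand_norm p q \<theta> f"
proof -
  obtain M where M: "0 \<le> M" "Linf_norm g = ennreal M"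
    using fin by (cases "Linf_norm g") auto
  then have "AE x in lebesgue. \<bar>g x\<bar> \<le> M"
    using esssup_AE[of "\<lambda>x. ennreal \<bar>g x\<bar>" lebesgue] by (simp add: Linf_norm_def)
  then show "mult_op g f \<in> grand_space p q \<theta>"
    and "grand_norm p q \<theta> (mult_op g f) \<le> Linf_norm g * grand_norm p q \<theta> f"
    using mult_op_bounded_if_AE_bounded[OF f g M(1) _ p q] M(2) by simp_all
qed

lemma unit_intervals_disjoint:
  fixes j k :: int
  assumes "j \<noteq> k"
  shows "{real_of_int j..<real_of_int j + 1} \<inter> {real_of_int k..<real_of_int k + 1} = {}"
proof -
  have "floor x = j" "floor x = k" if "x \<in> {real_of_int j..<real_of_int j + 1}" "x \<in> {real_of_int k..<real_of_int k + 1}" for x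
    using that by (simp_all add: floor_eq_iff)
  then show ?thesis using assms by blast
qed

lemma ex_unit_interval_emeasure_pos:
  assumes "A \<in> sets lebesgue" "0 < emeasure lebesgue A"
  shows "\<exists>k::int. 0 < emeasure lebesgue (A \<inter> {real_of_int k..<real_of_int k + 1})"
proof (rule ccontr)
  assume "\<not> ?thesis"
  then have "(\<Union>k::int. A \<inter> {real_of_int k..<real_of_int k + 1}) \<in> null_sets lebesgue"
    using assms(1) by (intro null_sets_UN') (auto simp: null_sets_def)
  moreover have "(\<Union>k::int. A \<inter> {real_of_int k..<real_of_int k + 1}) = A"
  proof safe
    fix x assume "x \<in> A"
    then show "x \<in> (\<Union>k::int. A \<inter> {real_of_int k..<real_of_int k + 1})"
      by (intro UN_I[of "floor x"]) simp_all
  qed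
  ultimately show False
    using assms(2) by (simp add: null_sets_def)
qed

lemma emeasure_subset_unit_interval:
  assumes "E \<in> sets lebesgue" "E \<subseteq> {real_of_int k..<real_of_int k + 1}"
  shows "emeasure lebesgue E = ennreal (measure lebesgue E)"
proof -
  have "emeasure lebesgue E \<le> emeasure lebesgue {real_of_int k..<real_of_int k + 1}"
    using assms by (intro emeasure_mono) auto
  then show ?thesis
    by (intro emeasure_eq_ennreal_measure) (auto simp: top_unique)
qed

lemma loc_int_indicator_unit_interval:
  assumes "E \<in> sets lebesgue" and E: "E \<subseteq> {real_of_int k..<real_of_int k + 1}"
  shows "loc_int p (\<lambda>x. complex_of_real (indicator E x))
       = (\<lambda>j. if j = k then ennreal (measure lebesgue E) else 0)"
proof
  fix j
  have "loc_int p (\<lambda>x. complex_of_real (indicator E x)) j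
      = emeasure lebesgue (E \<inter> {real_of_int j..<real_of_int j + 1})"
    unfolding loc_int_def using assms(1)
    by (subst nn_integral_indicator[symmetric]) (auto intro!: nn_integral_cong simp: indicator_def)
  also have "\<dots> = (if j = k then ennreal (measure lebesgue E) else 0)"
  proof (cases "j = k")
    case True
    then have "E \<inter> {real_of_int j..<real_of_int j + 1} = E" using E by blast
    then show ?thesis using emeasure_subset_unit_interval[OF assms] by (simp only: if_P[OF True])
  next
    case False
    then have "E \<inter> {real_of_int j..<real_of_int j + 1} = {}"
      using E unit_intervals_disjoint[of j k] by blast
    then show ?thesis using False by simp
  qed
  finally show "loc_int p (\<lambda>x. complex_of_real (indicator E x)) j
      = (if j = k then ennreal (measure lebesgue E) else 0)" .
qed

lemma grand_norm_indicator_unit_interval: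
  assumes "E \<in> sets lebesgue" "E \<subseteq> {real_of_int k..<real_of_int k + 1}" "0 < p" "0 < q"
  shows "grand_norm p q \<theta> (\<lambda>x. complex_of_real (indicator E x))
       = (SUP \<epsilon>\<in>{0<..}. ennreal (\<epsilon> powr (\<theta> / (q * (1 + \<epsilon>))) * measure lebesgue E powr (1 / p)))"
  unfolding grand_norm_eq_SUP_grand_term loc_int_indicator_unit_interval[OF assms(1,2)]
  using assms(3,4) by (intro SUP_cong) (simp_all add: grand_term_concentrated)

lemma powr_div_one_plus_le_exp:
  fixes \<epsilon> t :: real
  assumes "0 < \<epsilon>" "0 \<le> t"
  shows "\<epsilon> powr (t / (1 + \<epsilon>)) \<le> exp t"
proof -
  have "\<epsilon> powr (t / (1 + \<epsilon>)) \<le> exp (1 + \<epsilon>) powr (t / (1 + \<epsilon>))"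
    using assms exp_ge_add_one_self[of "1 + \<epsilon>"] by (intro powr_mono2) auto
  also have "\<dots> = exp t"
    using assms by (simp add: powr_def)
  finally show ?thesis .
qed

lemma indicator_unit_interval_in_grand_space:
  assumes E: "E \<in> sets lebesgue" "E \<subseteq> {real_of_int k..<real_of_int k + 1}"
    and p: "0 < p" and q: "0 < q" and \<theta>: "0 \<le> \<theta>"
  shows "(\<lambda>x. complex_of_real (indicator E x)) \<in> grand_space p q \<theta>"
proof -
  define m where "m = measure lebesgue E"
  have bound: "\<epsilon> powr (\<theta> / (q * (1 + \<epsilon>))) * m powr (1 / p) \<le> exp (\<theta> / q) * m powr (1 / p)"
    if "0 < \<epsilon>" for \<epsilon>
  proof (rule mult_right_mono)
    show "\<epsilon> powr (\<theta> / (q * (1 + \<epsilon>))) \<le> exp (\<theta> / q)"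
      using powr_div_one_plus_le_exp[of \<epsilon> "\<theta> / q"] that q \<theta> by (simp add: divide_divide_eq_left)
  qed simp
  have "grand_norm p q \<theta> (\<lambda>x. complex_of_real (indicator E x))
      \<le> ennreal (exp (\<theta> / q) * m powr (1 / p))"
  proof -
    have "grand_norm p q \<theta> (\<lambda>x. complex_of_real (indicator E x))
      = (SUP \<epsilon>\<in>{0<..}. ennreal (\<epsilon> powr (\<theta> / (q * (1 + \<epsilon>))) * m powr (1 / p)))"
      unfolding m_def by (rule grand_norm_indicator_unit_interval[OF E p q])
    also have "\<dots> \<le> ennreal (exp (\<theta> / q) * m powr (1 / p))"
      by (rule SUP_least) (simp add: ennreal_leI bound)
    finally show ?thesis .
  qed
  then have "grand_norm p q \<theta> (\<lambda>x. complex_of_real (indicator E x)) < \<infinity>"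
    by (rule le_less_trans) simp
  moreover have [measurable]: "E \<in> sets lebesgue" by (rule E)
  moreover have "(\<lambda>x. complex_of_real (indicator E x)) \<in> borel_measurable lebesgue"
    by measurable
  ultimately show ?thesis
    unfolding grand_space_def by (simp add: loc_int_indicator_unit_interval[OF E])
qed

lemma grand_norm_indicator_unit_interval_pos:
  assumes E: "E \<in> sets lebesgue" "E \<subseteq> {real_of_int k..<real_of_int k + 1}"
    and pos: "0 < emeasure lebesgue E" and p: "0 < p" and q: "0 < q"
  shows "0 < grand_norm p q \<theta> (\<lambda>x. complex_of_real (indicator E x))"
proof -
  have "0 < measure lebesgue E"
    using pos by (simp add: emeasure_subset_unit_interval[OF E])
  then have "0 < ennreal (1 powr (\<theta> / (q * (1 + 1))) * measure lebesgue E powr (1 / p))"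
    by simp
  also have "\<dots> \<le> grand_norm p q \<theta> (\<lambda>x. complex_of_real (indicator E x))"
    unfolding grand_norm_indicator_unit_interval[OF E p q] by (rule SUP_upper) simp
  finally show ?thesis .
qed

lemma Linf_norm_le_if_mult_op_bounded:
  assumes p: "0 < p" and q: "0 < q" and \<theta>: "0 \<le> \<theta>" and [measurable]: "g \<in> borel_measurable lebesgue"
    and C: "\<forall>f\<in>grand_space p q \<theta>. grand_norm p q \<theta> (mult_op g f) \<le> C * grand_norm p q \<theta> f"
  shows "Linf_norm g \<le> C"
proof (rule dense_le)
  fix y assume y: "y < Linf_norm g"
  then obtain N where N: "0 \<le> N" "y = ennreal N"
    by (cases y) (auto simp: top_unique)
  define A where "A = {x. N < \<bar>g x\<bar>}"
  have "{x \<in> space lebesgue. N < \<bar>g x\<bar>} \<in> sets lebesgue"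
    by measurable
  then have A: "A \<in> sets lebesgue"
    by (simp add: A_def)
  have "0 < emeasure lebesgue {x \<in> space lebesgue. ennreal N < ennreal \<bar>g x\<bar>}"
    using y N unfolding Linf_norm_def by (intro esssup_pos_measure) simp_all
  then have "0 < emeasure lebesgue A"
    unfolding A_def using N by (simp add: ennreal_less_iff)
  then obtain k where k: "0 < emeasure lebesgue (A \<inter> {real_of_int k..<real_of_int k + 1})"
    using ex_unit_interval_emeasure_pos[OF A] by blast
  define E where "E = A \<inter> {real_of_int k..<real_of_int k + 1}"
  have E: "E \<in> sets lebesgue" "E \<subseteq> {real_of_int k..<real_of_int k + 1}"
    unfolding E_def using A by auto
  define f where "f = (\<lambda>x. complex_of_real (indicator E x))"
  have f: "f \<in> grand_space p q \<theta>"
    unfolding f_def by (rule indicator_unit_interval_in_grand_space[OF E p q \<theta>])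
  have "0 < grand_norm p q \<theta> f" "grand_norm p q \<theta> f < \<infinity>"
    using grand_norm_indicator_unit_interval_pos[OF E _ p q] k f
    by (simp_all add: E_def f_def grand_space_def)
  moreover have "ennreal N * grand_norm p q \<theta> f \<le> C * grand_norm p q \<theta> f"
  proof -
    have "cmod (mult_op (\<lambda>_. N) f x) \<le> cmod (mult_op g f x)" for x
      using N by (auto simp: f_def E_def A_def mult_op_def indicator_def)
    then have "grand_norm p q \<theta> (mult_op (\<lambda>_. N) f) \<le> grand_norm p q \<theta> (mult_op g f)"
      using p q by (intro grand_norm_mono loc_int_mono_AE) auto
    also have "\<dots> \<le> C * grand_norm p q \<theta> f"
      using C f by blast
    finally show ?thesis
      using f N p q by (simp add: grand_norm_mult_op_const grand_space_def)
  qed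
  ultimately show "y \<le> C"
    using N ennreal_mult_le_mult_iff[of "grand_norm p q \<theta> f" "ennreal N" C]
    by (simp add: mult.commute)
qed

theorem theorem4p1:
  fixes p q \<theta> :: real and g :: "real \<Rightarrow> real"
  assumes "1 \<le> p" and "1 \<le> q" and "0 < \<theta>"
    and "g \<in> borel_measurable lebesgue"
    and "compact (closure {x. g x \<noteq> 0})"
  shows "(mult_bounded p q \<theta> g \<longleftrightarrow> Linf_norm g < \<infinity>) \<and>
         (mult_bounded p q \<theta> g \<longrightarrow> mult_opnorm p q \<theta> g = Linf_norm g)"
proof -
  have p: "0 < p" and q: "0 < q" and \<theta>: "0 \<le> \<theta>"
    using assms(1-3) by auto
  note upper = mult_op_bounded_by_Linf_norm[OF _ _ assms(4) p q]
  note lower = Linf_norm_le_if_mult_op_bounded[OF p q \<theta> assms(4)]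
  have "mult_bounded p q \<theta> g \<longleftrightarrow> Linf_norm g < \<infinity>"
  proof
    assume "mult_bounded p q \<theta> g"
    then obtain C :: real
      where "\<forall>f\<in>grand_space p q \<theta>. grand_norm p q \<theta> (mult_op g f) \<le> ennreal C * grand_norm p q \<theta> f"
      unfolding mult_bounded_def by blast
    then have "Linf_norm g \<le> ennreal C"
      by (rule lower)
    then show "Linf_norm g < \<infinity>"
      by (rule le_less_trans) simp
  next
    assume "Linf_norm g < \<infinity>"
    then show "mult_bounded p q \<theta> g"
      unfolding mult_bounded_def using upper
      by (intro conjI ballI exI[of _ "enn2real (Linf_norm g)"]) (simp_all add: less_top)
  qed
  moreover have "mult_opnorm p q \<theta> g = Linf_norm g" if "Linf_norm g < \<infinity>"
    unfolding mult_opnorm_def using upper(2)[OF that] lower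
    by (intro antisym Inf_lower Inf_greatest) auto
  ultimately show ?thesis
    by blast
qed

end
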